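(* Let $r\ge 2$ and $m$ be integers with $0\le 2m\le r$, $n=2r-4m$, and let $f:S^2(S^r(\mathbb{C}^2))\to S^{n}(\mathbb{C}^2)$ be an $\mathfrak{sl}_2(\mathbb{C})$-equivariant linear map, written $f=\sum_{k=0}^n q_k w_k$, with $\lambda=q_0(x_0x_{2m})\neq 0$. Then for every $0\le k\le n/2$, $$q_k(x_0x_{2m+k})=q_{n-k}(x_rx_{r-2m-k})\neq 0.$$ Moreover, if $m=0$, then for every $0\le k\le n/2$ and every $0\le i\le k$, $$q_k(x_ix_{k-i})=q_{n-k}(x_{r-i}x_{r-k+i})\neq 0.$$
   Context: $\mathfrak{sl}_2(\mathbb{C})$ has basis $X=\begin{pmatrix}0&1\\0&0\end{pmatrix}$, $H=\begin{pmatrix}1&0\\0&-1\end{pmatrix}$, $Y=\begin{pmatrix}0&0\\1&0\end{pmatrix}$, acting on the irreducible modules $S^d(\mathbb{C}^2)$. Let $x_0\in S^r(\mathbb{C}^2)$ be a highest weight vector and $x_i=Y^ix_0/i!$ ($0\le i\le r$), so $Yx_i=(i+1)x_{i+1}$, $Xx_i=(r-i+1)x_{i-1}$, $Hx_i=(r-2i)x_i$. Let $w_0\in S^n(\mathbb{C}^2)$ be a highest weight vector and $w_k=Y^kw_0/k!$ ($0\le k\le n$). Writing $f=\sum_{k=0}^n q_kw_k$ means $f(u)=\sum_k q_k(u)w_k$ for linear forms $q_k$ on $S^2(S^r(\mathbb{C}^2))$; $q_k(x_ix_j)$ is the value on the product $x_ix_j$. *)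

theory Defs
  imports Complex_Main
begin

text \<open>An sl2-equivariant linear map f : S^2(S^r(C^2)) -> S^n(C^2), written
  f = sum_k q_k w_k, is encoded by its coefficient function
  q k i j = q_k(x_i x_j)  (i, j \<le> r, k \<le> n),
  i.e. by the values of the linear forms q_k on the spanning products x_i x_j.
  Linearity is automatic (a linear map is determined by its values on a basis);
  well-definedness on the symmetric square means q k i j = q k j i.
  Equivariance is imposed on the spanning products x_i x_j for Z = H, Y, X, using
  Z(x_i x_j) = (Z x_i) x_j + x_i (Z x_j) with
  Y x_i = (i+1) x_(i+1) (x_(r+1) = 0), X x_i = (r-i+1) x_(i-1) (x_(-1) = 0),
  H x_i = (r-2i) x_i, and likewise for w_k in S^n.\<close>

definition sym_well_defined :: "nat \<Rightarrow> nat \<Rightarrow> (nat \<Rightarrow> nat \<Rightarrow> nat \<Rightarrow> complex) \<Rightarrow> bool" where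
  "sym_well_defined r n q \<longleftrightarrow> (\<forall>k\<le>n. \<forall>i\<le>r. \<forall>j\<le>r. q k i j = q k j i)"

definition H_equivariant :: "nat \<Rightarrow> nat \<Rightarrow> (nat \<Rightarrow> nat \<Rightarrow> nat \<Rightarrow> complex) \<Rightarrow> bool" where
  "H_equivariant r n q \<longleftrightarrow> (\<forall>k\<le>n. \<forall>i\<le>r. \<forall>j\<le>r.
     of_int ((int r - 2 * int i) + (int r - 2 * int j)) * q k i j
       = of_int (int n - 2 * int k) * q k i j)"

definition Y_equivariant :: "nat \<Rightarrow> nat \<Rightarrow> (nat \<Rightarrow> nat \<Rightarrow> nat \<Rightarrow> complex) \<Rightarrow> bool" where
  "Y_equivariant r n q \<longleftrightarrow> (\<forall>k\<le>n. \<forall>i\<le>r. \<forall>j\<le>r.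
     (if i < r then of_nat (i + 1) * q k (i + 1) j else 0)
       + (if j < r then of_nat (j + 1) * q k i (j + 1) else 0)
     = (if 0 < k then of_nat k * q (k - 1) i j else 0))"

definition X_equivariant :: "nat \<Rightarrow> nat \<Rightarrow> (nat \<Rightarrow> nat \<Rightarrow> nat \<Rightarrow> complex) \<Rightarrow> bool" where
  "X_equivariant r n q \<longleftrightarrow> (\<forall>k\<le>n. \<forall>i\<le>r. \<forall>j\<le>r.
     (if 0 < i then of_nat (r - i + 1) * q k (i - 1) j else 0)
       + (if 0 < j then of_nat (r - j + 1) * q k i (j - 1) else 0)
     = (if k < n then of_nat (n - k) * q (k + 1) i j else 0))"

definition sl2_equivariant_map :: "nat \<Rightarrow> nat \<Rightarrow> (nat \<Rightarrow> nat \<Rightarrow> nat \<Rightarrow> complex) \<Rightarrow> bool" where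
  "sl2_equivariant_map r n q \<longleftrightarrow> sym_well_defined r n q \<and> H_equivariant r n q
     \<and> Y_equivariant r n q \<and> X_equivariant r n q"

end

theory Submission
  imports Defs
begin

text \<open>Applying X to x_0 x_j and Y to x_r x_j gives two-term recurrences along the rows
  k \<mapsto> q_k(x_0 x_(2m+k)) and k \<mapsto> q_(n-k)(x_r x_(r-2m-k)) with the same nonzero coefficients;
  at k = r - 2m the two rows meet in q_(r-2m)(x_0 x_r) = q_(r-2m)(x_r x_0), so they agree, and the
  first one never vanishes because it starts at \<lambda>.
  For m = 0 the same comparison of X and Y, started from the weight-vanishing of q_0 and q_n,
  shows q_k(x_i x_j) = q_(n-k)(x_(r-i) x_(r-j)) everywhere, while the X-recurrence writes every
  q_k(x_i x_(k-i)) as a sum of positive real multiples of \<lambda>.\<close>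

locale sl2_equivariant =
  fixes r n :: nat and q :: "nat \<Rightarrow> nat \<Rightarrow> nat \<Rightarrow> complex"
  assumes equivariant: "sl2_equivariant_map r n q"
begin

lemma q_commute: "k \<le> n \<Longrightarrow> i \<le> r \<Longrightarrow> j \<le> r \<Longrightarrow> q k i j = q k j i"
  using equivariant unfolding sl2_equivariant_map_def sym_well_defined_def by blast

lemma H_eq: "k \<le> n \<Longrightarrow> i \<le> r \<Longrightarrow> j \<le> r \<Longrightarrow>
    of_int ((int r - 2 * int i) + (int r - 2 * int j)) * q k i j = of_int (int n - 2 * int k) * q k i j"
  using equivariant unfolding sl2_equivariant_map_def H_equivariant_def by blast

lemma Y_eq: "k \<le> n \<Longrightarrow> i \<le> r \<Longrightarrow> j \<le> r \<Longrightarrow>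
    (if i < r then of_nat (i + 1) * q k (i + 1) j else 0)
      + (if j < r then of_nat (j + 1) * q k i (j + 1) else 0)
    = (if 0 < k then of_nat k * q (k - 1) i j else 0)"
  using equivariant unfolding sl2_equivariant_map_def Y_equivariant_def by blast

lemma X_eq: "k \<le> n \<Longrightarrow> i \<le> r \<Longrightarrow> j \<le> r \<Longrightarrow>
    (if 0 < i then of_nat (r - i + 1) * q k (i - 1) j else 0)
      + (if 0 < j then of_nat (r - j + 1) * q k i (j - 1) else 0)
    = (if k < n then of_nat (n - k) * q (k + 1) i j else 0)"
  using equivariant unfolding sl2_equivariant_map_def X_equivariant_def by blast

lemma q_eq_0_if_weights_differ:
  assumes "k \<le> n" "i \<le> r" "j \<le> r"
    and "(int r - 2 * int i) + (int r - 2 * int j) \<noteq> int n - 2 * int k"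
  shows "q k i j = 0"
proof -
  have "(of_int ((int r - 2 * int i) + (int r - 2 * int j)) :: complex) \<noteq> of_int (int n - 2 * int k)"
    using assms(4) by (subst of_int_eq_iff)
  then show ?thesis
    using H_eq[OF assms(1-3)] by auto
qed

lemma X_eq_row_0:
  "k < n \<Longrightarrow> j < r \<Longrightarrow> of_nat (r - j) * q k 0 j = of_nat (n - k) * q (Suc k) 0 (Suc j)"
  using X_eq[of k 0 "Suc j"] by (simp add: Suc_diff_Suc)

lemma Y_eq_row_r:
  "0 < k \<Longrightarrow> k \<le> n \<Longrightarrow> j < r \<Longrightarrow> of_nat (Suc j) * q k r (Suc j) = of_nat k * q (k - 1) r j"
  using Y_eq[of k r j] by simp

lemma row_0_nonzero:
  assumes "q 0 0 j0 \<noteq> 0" "j0 + k \<le> r" "k \<le> n"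
  shows "q k 0 (j0 + k) \<noteq> 0"
  using assms(2,3)
proof (induction k)
  case 0
  then show ?case using assms(1) by simp
next
  case (Suc k)
  have "of_nat (r - (j0 + k)) * q k 0 (j0 + k) = of_nat (n - k) * q (Suc k) 0 (j0 + Suc k)"
    using X_eq_row_0[of k "j0 + k"] Suc.prems by simp
  moreover have "of_nat (r - (j0 + k)) * q k 0 (j0 + k) \<noteq> 0"
    using Suc by (simp del: of_nat_diff)
  ultimately show ?case by auto
qed

text \<open>The two rows meet at k = r - j0 exactly because n = 2 (r - j0).\<close>
lemma row_0_eq_row_r:
  assumes "j0 \<le> r" "n = 2 * (r - j0)" "k \<le> r - j0"
  shows "q k 0 (j0 + k) = q (n - k) r (r - j0 - k)"
  using assms(3)
proof (induction k rule: inc_induct)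
  case base
  have "q (r - j0) 0 r = q (r - j0) r 0"
    using q_commute assms(2) by simp
  moreover have "n - (r - j0) = r - j0"
    using assms(2) by simp
  ultimately show ?case
    using assms(1) by simp
next
  case (step k)
  have row_0: "of_nat (r - j0 - k) * q k 0 (j0 + k) = of_nat (n - k) * q (Suc k) 0 (j0 + Suc k)"
    using X_eq_row_0[of k "j0 + k"] step.hyps assms(2) by simp
  have "Suc (r - j0 - Suc k) = r - j0 - k" "n - k - 1 = n - Suc k"
    using step.hyps by auto
  then have row_r: "of_nat (r - j0 - k) * q (n - k) r (r - j0 - k)
      = of_nat (n - k) * q (n - Suc k) r (r - j0 - Suc k)"
    using Y_eq_row_r[of "n - k" "r - j0 - Suc k"] step.hyps assms(2) by simp
  have "of_nat (r - j0 - k) * q k 0 (j0 + k) = of_nat (r - j0 - k) * q (n - k) r (r - j0 - k)"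
    using row_0 row_r step.IH by simp
  then show ?case
    using step.hyps by (auto simp del: of_nat_diff)
qed

lemma reflection_symmetry:
  assumes base: "\<And>i j. i \<le> r \<Longrightarrow> j \<le> r \<Longrightarrow> q 0 i j = q n (r - i) (r - j)"
    and "k \<le> n" "i \<le> r" "j \<le> r"
  shows "q k i j = q (n - k) (r - i) (r - j)"
  using assms(2-4)
proof (induction k arbitrary: i j)
  case 0
  then show ?case using base by simp
next
  case (Suc k)
  have X_side: "(if 0 < i then of_nat (r - i + 1) * q k (i - 1) j else 0)
      + (if 0 < j then of_nat (r - j + 1) * q k i (j - 1) else 0)
      = of_nat (n - k) * q (Suc k) i j"
    using X_eq[of k i j] Suc.prems by simp
  have flip: "(r - i < r) = (0 < i)" "(r - j < r) = (0 < j)"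
      "(0 < n - k) = True" "n - k - 1 = n - Suc k"
    using Suc.prems by auto
  have Y_side: "(if 0 < i then of_nat (r - i + 1) * q (n - k) (r - i + 1) (r - j) else 0)
      + (if 0 < j then of_nat (r - j + 1) * q (n - k) (r - i) (r - j + 1) else 0)
      = of_nat (n - k) * q (n - Suc k) (r - i) (r - j)"
    using Y_eq[of "n - k" "r - i" "r - j", OF diff_le_self diff_le_self diff_le_self,
        unfolded flip if_True] .
  have "0 < i \<Longrightarrow> q k (i - 1) j = q (n - k) (r - i + 1) (r - j)"
    "0 < j \<Longrightarrow> q k i (j - 1) = q (n - k) (r - i) (r - j + 1)"
    using Suc.IH[of "i - 1" j] Suc.IH[of i "j - 1"] Suc.prems by (simp_all add: Suc_diff_le)
  then have "of_nat (n - k) * q (Suc k) i j = of_nat (n - k) * q (n - Suc k) (r - i) (r - j)"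
    unfolding X_side[symmetric] Y_side[symmetric] by auto
  then show ?case
    using Suc.prems by simp
qed

text \<open>For n = 2r the weights force q_0 and q_n to vanish off x_0 x_0 and x_r x_r.\<close>
lemma reflection_symmetry_top:
  assumes "n = 2 * r" "q 0 0 0 = q n r r" "k \<le> n" "i \<le> r" "j \<le> r"
  shows "q k i j = q (n - k) (r - i) (r - j)"
proof (rule reflection_symmetry[OF _ assms(3-5)])
  fix i j assume ij: "i \<le> r" "j \<le> r"
  show "q 0 i j = q n (r - i) (r - j)"
  proof (cases "i = 0 \<and> j = 0")
    case True
    then show ?thesis using assms(2) by simp
  next
    case False
    then show ?thesis
      using q_eq_0_if_weights_differ[of 0 i j] q_eq_0_if_weights_differ[of n "r - i" "r - j"] ij assms(1)
      by auto
  qed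
qed

text \<open>Positivity of the coefficients is what rules out cancellation in the X-recurrence.\<close>
lemma diagonal_positive_multiple:
  assumes "k \<le> n" "i \<le> r" "j \<le> r" "i + j = k"
  shows "\<exists>c::real. c > 0 \<and> q k i j = of_real c * q 0 0 0"
  using assms
proof (induction k arbitrary: i j)
  case 0
  then show ?case by (auto intro: exI[of _ 1])
next
  case (Suc k)
  define pos where "pos z \<longleftrightarrow> (\<exists>c::real. c > 0 \<and> z = of_real c * q 0 0 0)" for z
  have pos_add: "pos (z + w)" if "pos z" "pos w" for z w
    using that unfolding pos_def by (metis add_pos_pos distrib_right of_real_add)
  have pos_scale: "pos (of_real c * z)" if "c > 0" "pos z" for c z
    using that unfolding pos_def by (metis mult_pos_pos mult.assoc of_real_mult)
  have "pos (q k (i - 1) j)" if "0 < i"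
    using Suc that unfolding pos_def by simp
  then have left: "pos (of_nat (r - i + 1) * q k (i - 1) j)" if "0 < i"
    using pos_scale[of "real (r - i + 1)"] that by simp
  have "pos (q k i (j - 1))" if "0 < j"
    using Suc that unfolding pos_def by simp
  then have right: "pos (of_nat (r - j + 1) * q k i (j - 1))" if "0 < j"
    using pos_scale[of "real (r - j + 1)"] that by simp
  have "pos ((if 0 < i then of_nat (r - i + 1) * q k (i - 1) j else 0)
      + (if 0 < j then of_nat (r - j + 1) * q k i (j - 1) else 0))"
    using left right pos_add Suc.prems(4) by (cases "0 < i"; cases "0 < j") auto
  then have "pos (of_nat (n - k) * q (Suc k) i j)"
    using X_eq[of k i j] Suc.prems by simp
  then have "pos (of_real (1 / real (n - k)) * (of_nat (n - k) * q (Suc k) i j))"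
    by (rule pos_scale[rotated]) (use Suc.prems in simp)
  then show ?case
    using Suc.prems unfolding pos_def by (simp del: of_nat_diff)
qed

lemma diagonal_nonzero:
  "q 0 0 0 \<noteq> 0 \<Longrightarrow> i + j \<le> n \<Longrightarrow> i \<le> r \<Longrightarrow> j \<le> r \<Longrightarrow> q (i + j) i j \<noteq> 0"
  using diagonal_positive_multiple[of "i + j" i j] by fastforce

end

theorem mainTheorem6:
  fixes r m n :: nat and q :: "nat \<Rightarrow> nat \<Rightarrow> nat \<Rightarrow> complex"
  assumes "r \<ge> 2" and "2 * m \<le> r" and "n = 2 * r - 4 * m"
    and "sl2_equivariant_map r n q"
    and "q 0 0 (2 * m) \<noteq> 0"
  shows "(\<forall>k. 2 * k \<le> n \<longrightarrow>
            q k 0 (2 * m + k) = q (n - k) r (r - 2 * m - k) \<and> q k 0 (2 * m + k) \<noteq> 0)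
       \<and> (m = 0 \<longrightarrow> (\<forall>k i. 2 * k \<le> n \<longrightarrow> i \<le> k \<longrightarrow>
            q k i (k - i) = q (n - k) (r - i) (r - k + i) \<and> q k i (k - i) \<noteq> 0))"
proof -
  interpret sl2_equivariant r n q
    using assms(4) by unfold_locales
  have n: "n = 2 * (r - 2 * m)"
    using assms(2,3) by simp
  have rows: "q k 0 (2 * m + k) = q (n - k) r (r - 2 * m - k) \<and> q k 0 (2 * m + k) \<noteq> 0"
    if "2 * k \<le> n" for k
  proof -
    have "k \<le> r - 2 * m" "2 * m + k \<le> r" "k \<le> n"
      using that n assms(2) by auto
    then show ?thesis
      using row_0_eq_row_r[OF assms(2) n] row_0_nonzero[OF assms(5)] by blast
  qed
  moreover have "q k i (k - i) = q (n - k) (r - i) (r - k + i) \<and> q k i (k - i) \<noteq> 0"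
    if "m = 0" "2 * k \<le> n" "i \<le> k" for k i
  proof -
    have "n = 2 * r" "q 0 0 0 = q n r r" "q 0 0 0 \<noteq> 0"
      using rows[of 0] that(1) n assms(5) by simp_all
    then show ?thesis
      using reflection_symmetry_top[of k i "k - i"] diagonal_nonzero[of i "k - i"] that(2,3)
      by (simp add: Nat.diff_diff_right)
  qed
  ultimately show ?thesis by blast
qed

end
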